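(* Let $d\ge 2$ be an integer, let $\alpha_0,\alpha_{d+1},\beta_0,\beta_{d+1}\in\mathbb R$ and $\mathbf a,\mathbf b\in\mathbb R^d$. Define the symmetric $(d+1)\times(d+1)$ matrices $$A=\begin{pmatrix}\alpha_0\,\mathrm{Id}_d & -2\mathbf a\\ -2\mathbf a^T & 2\alpha_{d+1}\end{pmatrix},\qquad B=\begin{pmatrix}\beta_0\,\mathrm{Id}_d & -2\mathbf b\\ -2\mathbf b^T & 2\beta_{d+1}\end{pmatrix},$$ where $\mathrm{Id}_d$ is the $d\times d$ identity matrix, and assume that $A$ is positive definite. Set $$\Delta=\big(4\,\mathbf a^T\mathbf b-(\beta_{d+1}\alpha_0+\beta_0\alpha_{d+1})\big)^2-4\big(2\Vert\mathbf a\Vert^2-\alpha_0\alpha_{d+1}\big)\big(2\Vert\mathbf b\Vert^2-\beta_0\beta_{d+1}\big).$$ Then $\Delta\ge 0$, $4\Vert\mathbf a\Vert^2-2\alpha_0\alpha_{d+1}\neq 0$, and, with $$\lambda_\pm=\frac{\big(-4\,\mathbf a^T\mathbf b+(\beta_{d+1}\alpha_0+\beta_0\alpha_{d+1})\big)\pm\sqrt{\Delta}}{4\Vert\mathbf a\Vert^2-2\alpha_0\alpha_{d+1}},$$ one has $$\max_{\mathbf z\in\mathbb R^{d+1}\setminus\{0\}}\frac{\vert\mathbf z^TB\mathbf z\vert}{\mathbf z^TA\mathbf z}=\rho\big(A^{-1/2}BA^{-1/2}\big)=\max\Big(\frac{\vert\beta_0\vert}{\alpha_0},\ \vert\lambda_+\vert,\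 \vert\lambda_-\vert\Big),$$ where $\rho(\cdot)$ denotes the spectral radius and $A^{-1/2}$ is the inverse of the symmetric positive definite square root of $A$.
   Context: $\Vert\cdot\Vert$ is the Euclidean norm on $\mathbb R^d$. This computation is used to determine the blending coefficients guaranteeing positivity of internal energy in a bound-preserving scheme for the Euler equations, via the ratio $\vert(\Delta\hat{\mathbf f})^T\psi(\mathbf w)\vert/(\mathbf u^{\star})^T\psi(\mathbf w)$ with $\psi(\mathbf w)=(\tfrac{\Vert\mathbf w\Vert^2}{2},-\mathbf w,1)$, after homogenizing $\mathbf w\mapsto\mathbf w/w_{d+1}$ and setting $\mathbf z=(\mathbf w,w_{d+1})$. *)

theory Defs
  imports "Jordan_Normal_Form.Spectral_Radius"
begin

definition block_mat :: "nat \<Rightarrow> real \<Rightarrow> real vec \<Rightarrow> real \<Rightarrow> real mat" where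
  "block_mat d c0 v c1 = mat (d+1) (d+1) (\<lambda>(i,j).
     if i < d \<and> j < d then (if i = j then c0 else 0)
     else if i < d then -2 * v $ i
     else if j < d then -2 * v $ j
     else 2 * c1)"

definition pos_def_mat :: "nat \<Rightarrow> real mat \<Rightarrow> bool" where
  "pos_def_mat n A \<longleftrightarrow> A \<in> carrier_mat n n \<and> transpose_mat A = A \<and>
     (\<forall>v \<in> carrier_vec n. v \<noteq> 0\<^sub>v n \<longrightarrow> v \<bullet> (A *\<^sub>v v) > 0)"

definition pd_sqrt :: "nat \<Rightarrow> real mat \<Rightarrow> real mat" where
  "pd_sqrt n A = (THE S. pos_def_mat n S \<and> S * S = A)"

definition mat_inv :: "nat \<Rightarrow> real mat \<Rightarrow> real mat" where
  "mat_inv n A = (THE B. B \<in> carrier_mat n n \<and> A * B = 1\<^sub>m n \<and> B * A = 1\<^sub>m n)"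

definition inv_sqrt :: "nat \<Rightarrow> real mat \<Rightarrow> real mat" where
  "inv_sqrt n A = mat_inv n (pd_sqrt n A)"

end

theory Submission
  imports Defs
begin

(* With S the positive definite square root of A, the matrix S^-1 B S^-1 has the same eigenvalues
   as the pencil B - c A, and B - c A is again a block matrix, with parameters beta0 - c alpha0,
   b - c a and beta1 - c alpha1. Its kernel is nontrivial iff c alpha0 = beta0 or the quadratic
   2 (beta0 - c alpha0) (beta1 - c alpha1) - 4 |b - c a|^2 (twice the Schur complement) vanishes,
   and the roots of that quadratic are -lambda_+ and -lambda_-. For mu above the largest modulus m
   of these eigenvalues, mu A - B and mu A + B are block matrices with positive corner and
   nonnegative Schur complement, hence positive semidefinite; so |z^T B z| <= m z^T A z, with
   equality at an eigenvector of the pencil for an eigenvalue of modulus m. *)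

lemma map_mat_of_real_real: "map_mat (of_real :: real \<Rightarrow> real) A = A"
  by (rule eq_matI) auto

lemma scalar_prod_eq_sum_lessThan:
  "v \<in> carrier_vec n \<Longrightarrow> w \<in> carrier_vec n \<Longrightarrow> v \<bullet> w = (\<Sum>i<n. v $ i * w $ i)"
  by (simp add: scalar_prod_def atLeast0LessThan)

lemma scalar_prod_self_nonneg:
  assumes "v \<in> carrier_vec n"
  shows "v \<bullet> v \<ge> (0::real)"
  unfolding scalar_prod_eq_sum_lessThan[OF assms assms] by (simp add: sum_nonneg)

lemma scalar_prod_self_eq_0:
  fixes v :: "real vec"
  assumes v: "v \<in> carrier_vec n" and "v \<bullet> v = 0"
  shows "v = 0\<^sub>v n"
proof -
  have "\<forall>i\<in>{..<n}. v$i * v$i = 0"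
    using assms(2) unfolding scalar_prod_eq_sum_lessThan[OF v v]
    by (subst sum_nonneg_eq_0_iff[symmetric]) simp_all
  with v show ?thesis by (intro eq_vecI) auto
qed

lemma sum_square_diff:
  fixes f g :: "'b \<Rightarrow> 'a::comm_ring_1"
  shows "(\<Sum>i\<in>I. (f i - c * g i)\<^sup>2)
    = (\<Sum>i\<in>I. (f i)\<^sup>2) - 2 * c * (\<Sum>i\<in>I. f i * g i) + c\<^sup>2 * (\<Sum>i\<in>I. (g i)\<^sup>2)"
proof -
  have "(\<Sum>i\<in>I. (f i - c * g i)\<^sup>2) = (\<Sum>i\<in>I. (f i)\<^sup>2 - 2 * c * (f i * g i) + c\<^sup>2 * (g i)\<^sup>2)"
    by (intro sum.cong) (simp_all add: power2_eq_square algebra_simps)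
  then show ?thesis
    by (simp add: sum.distrib sum_subtractf sum_distrib_left)
qed

lemma sum_product_square_le:
  fixes f g :: "'b \<Rightarrow> real"
  assumes "finite I"
  shows "(\<Sum>i\<in>I. f i * g i)\<^sup>2 \<le> (\<Sum>i\<in>I. (f i)\<^sup>2) * (\<Sum>i\<in>I. (g i)\<^sup>2)"
proof (cases "(\<Sum>i\<in>I. (f i)\<^sup>2) = 0")
  case True
  then have "\<forall>i\<in>I. f i = 0" using assms by (simp add: sum_nonneg_eq_0_iff)
  then show ?thesis by simp
next
  case False
  define F G Y where "F = (\<Sum>i\<in>I. (f i)\<^sup>2)" and "G = (\<Sum>i\<in>I. (g i)\<^sup>2)"
    and "Y = (\<Sum>i\<in>I. f i * g i)"
  have F: "F > 0" using False unfolding F_def by (simp add: sum_nonneg order_less_le)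
  have "0 \<le> (\<Sum>i\<in>I. (g i - Y / F * f i)\<^sup>2)" by (simp add: sum_nonneg)
  also have "\<dots> = G - 2 * (Y / F) * Y + (Y / F)\<^sup>2 * F"
    unfolding sum_square_diff F_def G_def Y_def by (simp add: mult.commute)
  also have "\<dots> = G - Y\<^sup>2 / F"
    using F by (simp add: power2_eq_square field_simps)
  finally have "Y\<^sup>2 \<le> G * F" using F by (simp add: divide_le_eq)
  then show ?thesis unfolding F_def G_def Y_def by (simp add: mult.commute)
qed

section \<open>Bordered matrices\<close>

(* The symmetric matrix [p Id_d + u v v^T, w v; w v^T, r]. The family is closed under squaring,
   which is how the square root of block_mat d c0 v c1 (p = c0, u = 0, w = -2, r = 2 c1) is found. *)
definition bordered_mat :: "nat \<Rightarrow> real \<Rightarrow> real \<Rightarrow> real vec \<Rightarrow> real \<Rightarrow> real \<Rightarrow> real mat" where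
  "bordered_mat d p u v w r = mat (d+1) (d+1) (\<lambda>(i,j).
     if i < d \<and> j < d then (if i = j then p else 0) + u * v$i * v$j
     else if i < d then w * v$i
     else if j < d then w * v$j
     else r)"

lemma bordered_mat_carrier [simp]: "bordered_mat d p u v w r \<in> carrier_mat (d+1) (d+1)"
  by (simp add: bordered_mat_def)

lemma bordered_mat_dim [simp]:
  "dim_row (bordered_mat d p u v w r) = d+1" "dim_col (bordered_mat d p u v w r) = d+1"
  by (simp_all add: bordered_mat_def)

lemma bordered_mat_index:
  "i < d+1 \<Longrightarrow> j < d+1 \<Longrightarrow> bordered_mat d p u v w r $$ (i,j) =
    (if i < d \<and> j < d then (if i = j then p else 0) + u * v$i * v$j
     else if i < d then w * v$i
     else if j < d then w * v$j
     else r)"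
  by (simp add: bordered_mat_def)

lemma transpose_bordered_mat: "transpose_mat (bordered_mat d p u v w r) = bordered_mat d p u v w r"
  by (rule eq_matI) (auto simp: bordered_mat_index)

lemma block_mat_eq_bordered_mat: "block_mat d c0 v c1 = bordered_mat d c0 0 v (-2) (2 * c1)"
  unfolding block_mat_def bordered_mat_def by (rule cong[of "mat _ _"]) auto

lemma bordered_mat_zero_vec: "bordered_mat d p u (0\<^sub>v d) w r = bordered_mat d p u' (0\<^sub>v d) w' r"
  by (rule eq_matI) (auto simp: bordered_mat_index)

lemma bordered_mat_mult_vec_of_real:
  fixes z :: "'a::real_field vec"
  assumes z: "z \<in> carrier_vec (d+1)" and i: "i < d+1"
  shows "(map_mat of_real (bordered_mat d p u v w r) *\<^sub>v z) $ i =
    (if i < d then of_real p * z$i + of_real (u * v$i) * (\<Sum>j<d. of_real (v$j) * z$j) + of_real (w * v$i) * z$d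
     else of_real w * (\<Sum>j<d. of_real (v$j) * z$j) + of_real r * z$d)"
proof -
  let ?M = "bordered_mat d p u v w r"
  have "(map_mat of_real ?M *\<^sub>v z) $ i = (\<Sum>j<d. of_real (?M $$ (i,j)) * z$j) + of_real (?M $$ (i,d)) * z$d"
    using i z by (simp add: scalar_prod_def atLeast0LessThan)
  moreover have "(\<Sum>j<d. of_real (?M $$ (i,j)) * z$j) =
      (if i < d then of_real p * z$i + of_real (u * v$i) * (\<Sum>j<d. of_real (v$j) * z$j)
       else of_real w * (\<Sum>j<d. of_real (v$j) * z$j))"
  proof (cases "i < d")
    case True
    then have "(\<Sum>j<d. of_real (?M $$ (i,j)) * z$j) =
        (\<Sum>j<d. (if i = j then of_real p * z$j else 0) + of_real (u * v$i) * (of_real (v$j) * z$j))"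
      by (intro sum.cong) (auto simp: bordered_mat_index algebra_simps)
    with True show ?thesis by (simp add: sum.distrib sum_distrib_left)
  next
    case False
    with i have "(\<Sum>j<d. of_real (?M $$ (i,j)) * z$j) = (\<Sum>j<d. of_real w * (of_real (v$j) * z$j))"
      by (intro sum.cong) (auto simp: bordered_mat_index algebra_simps)
    with False show ?thesis by (simp add: sum_distrib_left)
  qed
  ultimately show ?thesis using i by (simp add: bordered_mat_index)
qed

lemma bordered_mat_mult_vec:
  assumes "z \<in> carrier_vec (d+1)" and "i < d+1"
  shows "(bordered_mat d p u v w r *\<^sub>v z) $ i =
    (if i < d then p * z$i + u * v$i * (\<Sum>j<d. v$j * z$j) + w * v$i * z$d
     else w * (\<Sum>j<d. v$j * z$j) + r * z$d)"
  using bordered_mat_mult_vec_of_real[OF assms, of p u v w r] unfolding map_mat_of_real_real by simp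

lemma bordered_mat_quadratic_form:
  assumes z: "z \<in> carrier_vec (d+1)"
  shows "z \<bullet> (bordered_mat d p u v w r *\<^sub>v z) = p * (\<Sum>i<d. (z$i)\<^sup>2)
    + u * (\<Sum>i<d. v$i * z$i)\<^sup>2 + 2 * w * z$d * (\<Sum>i<d. v$i * z$i) + r * (z$d)\<^sup>2"
proof -
  let ?M = "bordered_mat d p u v w r" and ?Y = "\<Sum>i<d. v$i * z$i"
  have "z \<bullet> (?M *\<^sub>v z) = (\<Sum>i<d. z$i * (?M *\<^sub>v z)$i) + z$d * (?M *\<^sub>v z)$d"
    using z by (simp add: scalar_prod_def atLeast0LessThan)
  also have "(\<Sum>i<d. z$i * (?M *\<^sub>v z)$i) = (\<Sum>i<d. p * (z$i)\<^sup>2 + (u * ?Y + w * z$d) * (v$i * z$i))"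
    using z by (intro sum.cong)
      (simp_all add: bordered_mat_mult_vec power2_eq_square algebra_simps del: index_mult_mat_vec)
  also have "\<dots> = p * (\<Sum>i<d. (z$i)\<^sup>2) + (u * ?Y + w * z$d) * ?Y"
    by (simp add: sum.distrib sum_distrib_left)
  also have "(?M *\<^sub>v z)$d = w * ?Y + r * z$d"
    using z by (simp add: bordered_mat_mult_vec del: index_mult_mat_vec)
  finally show ?thesis by (simp add: power2_eq_square algebra_simps)
qed

lemma bordered_mat_col_sum:
  assumes v: "v \<in> carrier_vec d" and j: "j < d+1"
  shows "(\<Sum>k<d. v$k * col (bordered_mat d p u v w r) j $ k)
    = (if j < d then (p + u * (v \<bullet> v)) * v$j else w * (v \<bullet> v))"
proof (cases "j < d")
  case True
  then have "(\<Sum>k<d. v$k * col (bordered_mat d p u v w r) j $ k)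
      = (\<Sum>k<d. (if k = j then p * v$j else 0) + u * v$j * (v$k * v$k))"
    by (intro sum.cong) (auto simp: bordered_mat_index algebra_simps)
  with True show ?thesis unfolding scalar_prod_eq_sum_lessThan[OF v v]
    by (simp add: sum.distrib sum_distrib_left algebra_simps)
next
  case False
  with j have "(\<Sum>k<d. v$k * col (bordered_mat d p u v w r) j $ k) = (\<Sum>k<d. w * (v$k * v$k))"
    by (intro sum.cong) (auto simp: bordered_mat_index algebra_simps)
  with False show ?thesis unfolding scalar_prod_eq_sum_lessThan[OF v v] by (simp add: sum_distrib_left)
qed

lemma bordered_mat_square:
  assumes v: "v \<in> carrier_vec d"
  shows "bordered_mat d p u v w r * bordered_mat d p u v w r =
    bordered_mat d (p\<^sup>2) (2 * p * u + u\<^sup>2 * (v \<bullet> v) + w\<^sup>2) v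
      (w * (p + u * (v \<bullet> v) + r)) (w\<^sup>2 * (v \<bullet> v) + r\<^sup>2)"
    (is "?M * ?M = ?N")
proof (rule eq_matI)
  fix i j assume "i < dim_row ?N" "j < dim_col ?N"
  then have i: "i < d+1" and j: "j < d+1" by auto
  have col: "col ?M j \<in> carrier_vec (d+1)" by (rule carrier_vecI) simp
  have "(?M * ?M) $$ (i,j) = (?M *\<^sub>v col ?M j) $ i"
    using i j by simp
  also have "\<dots> = ?N $$ (i,j)"
    unfolding bordered_mat_mult_vec[OF col i] bordered_mat_col_sum[OF v j]
    using i j by (simp add: bordered_mat_index power2_eq_square algebra_simps)
  finally show "(?M * ?M) $$ (i,j) = ?N $$ (i,j)" .
qed auto

lemma zero_vecI_sum_squares:
  fixes z :: "real vec"
  assumes z: "z \<in> carrier_vec (d+1)" and "(\<Sum>i<d. (z$i)\<^sup>2) = 0" and "z$d = 0"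
  shows "z = 0\<^sub>v (d+1)"
proof -
  have "\<forall>i<d. z$i = 0" using assms(2) by (simp add: sum_nonneg_eq_0_iff)
  with assms(3) have "\<forall>i<d+1. z$i = 0" using less_Suc_eq by auto
  with z show ?thesis by (intro eq_vecI) auto
qed

lemma bordered_quadratic_pos:
  fixes n X Y t :: real
  assumes n: "n \<ge> 0" and X: "X \<ge> 0" and cs: "Y\<^sup>2 \<le> n * X" and nz: "X \<noteq> 0 \<or> t \<noteq> 0"
    and p: "p > 0" and pu: "p + u * n > 0" and schur: "w\<^sup>2 * n < (p + u * n) * r"
  shows "p * X + u * Y\<^sup>2 + 2 * w * t * Y + r * t\<^sup>2 > 0"
proof (cases "n = 0")
  case True
  then have "Y = 0" and r: "r > 0" using cs schur pu by (auto simp: zero_less_mult_iff)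
  have "p * X \<ge> 0" "r * t\<^sup>2 \<ge> 0" using p X r by simp_all
  moreover have "p * X > 0 \<or> r * t\<^sup>2 > 0"
    using nz X p r by (cases "t = 0") (simp_all add: order_less_le)
  moreover have "p * X + u * Y\<^sup>2 + 2 * w * t * Y + r * t\<^sup>2 = p * X + r * t\<^sup>2"
    using \<open>Y = 0\<close> by simp
  ultimately show ?thesis by linarith
next
  case False
  with n have n: "n > 0" by simp
  define k where "k = p + u * n"
  have k: "k > 0" and det: "k * r - w\<^sup>2 * n > 0" using pu schur unfolding k_def by auto
  have sos: "n * k * (p * X + u * Y\<^sup>2 + 2 * w * t * Y + r * t\<^sup>2)
      = k * p * (n * X - Y\<^sup>2) + (k * Y + n * w * t)\<^sup>2 + n * (k * r - w\<^sup>2 * n) * t\<^sup>2"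
    unfolding k_def by (simp add: power2_eq_square algebra_simps)
  have t1: "k * p * (n * X - Y\<^sup>2) \<ge> 0" using k p cs by simp
  have t3: "n * (k * r - w\<^sup>2 * n) * t\<^sup>2 \<ge> 0" using n det by simp
  have "p * X + u * Y\<^sup>2 + 2 * w * t * Y + r * t\<^sup>2 \<noteq> 0"
  proof
    assume "p * X + u * Y\<^sup>2 + 2 * w * t * Y + r * t\<^sup>2 = 0"
    then have "k * p * (n * X - Y\<^sup>2) + (k * Y + n * w * t)\<^sup>2 + n * (k * r - w\<^sup>2 * n) * t\<^sup>2 = 0"
      using sos by simp
    then have e1: "k * p * (n * X - Y\<^sup>2) = 0" and e2: "(k * Y + n * w * t)\<^sup>2 = 0"
      and e3: "n * (k * r - w\<^sup>2 * n) * t\<^sup>2 = 0"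
      using t1 t3 zero_le_power2[of "k * Y + n * w * t"] by linarith+
    from e3 n det have "t = 0" by simp
    moreover from e2 k this have "Y = 0" by simp
    moreover from e1 k p n this have "X = 0" by simp
    ultimately show False using nz by simp
  qed
  moreover have "n * k * (p * X + u * Y\<^sup>2 + 2 * w * t * Y + r * t\<^sup>2) \<ge> 0"
    unfolding sos using t1 t3 zero_le_power2[of "k * Y + n * w * t"] by linarith
  then have "p * X + u * Y\<^sup>2 + 2 * w * t * Y + r * t\<^sup>2 \<ge> 0"
    using mult_pos_pos[OF n k] by (simp add: zero_le_mult_iff)
  ultimately show ?thesis by (metis order.not_eq_order_implies_strict)
qed

lemma bordered_mat_pos_def:
  assumes v: "v \<in> carrier_vec d" and p: "p > 0" and pu: "p + u * (v \<bullet> v) > 0"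
    and schur: "w\<^sup>2 * (v \<bullet> v) < (p + u * (v \<bullet> v)) * r"
  shows "pos_def_mat (d+1) (bordered_mat d p u v w r)"
  unfolding pos_def_mat_def
proof (intro conjI ballI impI)
  fix z :: "real vec" assume z: "z \<in> carrier_vec (d+1)" and z0: "z \<noteq> 0\<^sub>v (d+1)"
  define X Y where "X = (\<Sum>i<d. (z$i)\<^sup>2)" and "Y = (\<Sum>i<d. v$i * z$i)"
  have cs: "Y\<^sup>2 \<le> (v \<bullet> v) * X"
    using sum_product_square_le[of "{..<d}" "\<lambda>i. v$i" "\<lambda>i. z$i"]
    unfolding X_def Y_def scalar_prod_eq_sum_lessThan[OF v v] by (simp add: power2_eq_square)
  have nz: "X \<noteq> 0 \<or> z$d \<noteq> 0" using zero_vecI_sum_squares[OF z] z0 unfolding X_def by blast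
  have X: "X \<ge> 0" unfolding X_def by (simp add: sum_nonneg)
  show "z \<bullet> (bordered_mat d p u v w r *\<^sub>v z) > 0"
    unfolding bordered_mat_quadratic_form[OF z] X_def[symmetric] Y_def[symmetric]
    by (rule bordered_quadratic_pos[OF scalar_prod_self_nonneg[OF v] X cs nz p pu schur])
next
  show "bordered_mat d p u v w r \<in> carrier_mat (d+1) (d+1)" by (rule bordered_mat_carrier)
  show "transpose_mat (bordered_mat d p u v w r) = bordered_mat d p u v w r"
    by (rule transpose_bordered_mat)
qed

section \<open>Positive definite matrices and their square roots\<close>

lemma pos_def_mat_carrier: "pos_def_mat n S \<Longrightarrow> S \<in> carrier_mat n n"
  by (simp add: pos_def_mat_def)

lemma pos_def_mat_quadratic_form_nonneg:
  assumes "pos_def_mat n S" and "x \<in> carrier_vec n"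
  shows "x \<bullet> (S *\<^sub>v x) \<ge> 0"
  using assms by (cases "x = 0\<^sub>v n") (auto simp: pos_def_mat_def intro: less_imp_le)

lemma pos_def_mat_invertible:
  assumes S: "pos_def_mat n S"
  obtains S' where "S' \<in> carrier_mat n n" "S * S' = 1\<^sub>m n" "S' * S = 1\<^sub>m n"
proof -
  have Sc: "S \<in> carrier_mat n n" using S by (rule pos_def_mat_carrier)
  have "det S \<noteq> 0"
  proof
    assume "det S = 0"
    then obtain v where "v \<in> carrier_vec n" "v \<noteq> 0\<^sub>v n" "S *\<^sub>v v = 0\<^sub>v n"
      using det_0_iff_vec_prod_zero[OF Sc] by auto
    with S show False by (auto simp: pos_def_mat_def)
  qed
  from det_non_zero_imp_unit[OF Sc this, of undefined] that show ?thesis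
    unfolding Units_def by (auto simp: ring_mat_simps)
qed

lemma sum_diag_mult_comm:
  fixes A B :: "'a::comm_semiring_0 mat"
  assumes "A \<in> carrier_mat n m" and "B \<in> carrier_mat m n"
  shows "(\<Sum>i<n. (A * B) $$ (i,i)) = (\<Sum>j<m. (B * A) $$ (j,j))"
  using assms by (simp add: scalar_prod_def atLeast0LessThan sum.swap[of _ "{..<n}"] mult.commute)

lemma sylvester_pos_def_symmetric_eq_0:
  assumes S: "pos_def_mat n S" and T: "pos_def_mat n T"
    and Dc: "D \<in> carrier_mat n n" and Dt: "transpose_mat D = D" and SD_DT: "S * D + D * T = 0\<^sub>m n n"
  shows "D = 0\<^sub>m n n"
proof -
  have Sc: "S \<in> carrier_mat n n" and Tc: "T \<in> carrier_mat n n"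
    using S T by (simp_all add: pos_def_mat_carrier)
  have row_col: "row D j = col D j" if "j < n" for j
    using row_transpose[of j D] Dt Dc that by simp
  have quad: "col D j \<bullet> (R *\<^sub>v col D j) = (D * (R * D)) $$ (j,j)"
    if "R \<in> carrier_mat n n" "j < n" for R j
    using that Dc row_col[OF that(2)] by (simp add: mult_mat_vec_def)
  \<comment> \<open>trace D S D + trace D T D = trace (D (S D + D T)) = 0, and both traces are sums of
    values of positive definite quadratic forms at the columns of D\<close>
  define qS qT where "qS j = col D j \<bullet> (S *\<^sub>v col D j)" and "qT j = col D j \<bullet> (T *\<^sub>v col D j)" for j
  have "(\<Sum>j<n. qT j) = (\<Sum>j<n. ((D * T) * D) $$ (j,j))"
    unfolding qT_def using quad Tc Dc by (intro sum.cong) auto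
  also have "\<dots> = (\<Sum>j<n. (D * (D * T)) $$ (j,j))"
    using Tc Dc by (intro sum_diag_mult_comm) auto
  finally have "(\<Sum>j<n. qS j + qT j) = (\<Sum>j<n. (D * (S * D)) $$ (j,j) + (D * (D * T)) $$ (j,j))"
    unfolding sum.distrib qS_def using quad Sc by simp
  also have "\<dots> = (\<Sum>j<n. (D * (S * D + D * T)) $$ (j,j))"
  proof -
    have "D * (S * D + D * T) = D * (S * D) + D * (D * T)"
      using Sc Tc Dc by (intro mult_add_distrib_mat) auto
    then show ?thesis using Sc Tc Dc by (intro sum.cong) auto
  qed
  also have "\<dots> = 0" unfolding SD_DT using Dc by simp
  finally have sum0: "(\<Sum>j<n. qS j + qT j) = 0" .
  have "qS j \<ge> 0" "qT j \<ge> 0" if "j < n" for j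
    unfolding qS_def qT_def
    using that Dc pos_def_mat_quadratic_form_nonneg[OF S] pos_def_mat_quadratic_form_nonneg[OF T] by auto
  moreover from this sum0 have "qS j + qT j = 0" if "j < n" for j
    using that by (subst (asm) sum_nonneg_eq_0_iff) auto
  ultimately have qS0: "qS j = 0" if "j < n" for j
    using that by (meson add_nonneg_eq_0_iff)
  have col0: "col D j = 0\<^sub>v n" if j: "j < n" for j
  proof (rule ccontr)
    assume "col D j \<noteq> 0\<^sub>v n"
    with S j Dc have "qS j > 0" unfolding qS_def pos_def_mat_def by auto
    with qS0[OF j] show False by simp
  qed
  show ?thesis
  proof (rule eq_matI)
    fix i j assume "i < dim_row (0\<^sub>m n n :: real mat)" "j < dim_col (0\<^sub>m n n :: real mat)"
    then have ij: "i < n" "j < n" by simp_all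
    have "D $$ (i,j) = col D j $ i" using Dc ij by simp
    also have "\<dots> = 0" using col0[OF ij(2)] ij(1) by simp
    finally show "D $$ (i,j) = 0\<^sub>m n n $$ (i,j)" using ij by simp
  qed (use Dc in auto)
qed

lemma pos_def_mat_sqrt_unique:
  assumes S: "pos_def_mat n S" and T: "pos_def_mat n T" and ST: "S * S = T * T"
  shows "S = T"
proof -
  have Sc: "S \<in> carrier_mat n n" "transpose_mat S = S"
    and Tc: "T \<in> carrier_mat n n" "transpose_mat T = T"
    using S T by (auto simp: pos_def_mat_def)
  have "S * (S - T) + (S - T) * T = S * S - S * T + (S * T - T * T)"
    using Sc Tc by (simp add: mult_minus_distrib_mat minus_mult_distrib_mat)
  also have "\<dots> = 0\<^sub>m n n"
    unfolding ST using Sc Tc by (intro eq_matI) auto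
  finally have sylvester: "S * (S - T) + (S - T) * T = 0\<^sub>m n n" .
  have "S - T \<in> carrier_mat n n" "transpose_mat (S - T) = S - T"
    using Sc Tc by (simp_all add: minus_carrier_mat transpose_minus)
  from sylvester_pos_def_symmetric_eq_0[OF S T this sylvester] have "S - T = 0\<^sub>m n n" .
  show "S = T"
  proof (rule eq_matI)
    fix i j assume "i < dim_row T" "j < dim_col T"
    with Tc have ij: "i < n" "j < n" by auto
    have "S $$ (i,j) - T $$ (i,j) = (S - T) $$ (i,j)" using ij Sc Tc by simp
    also have "\<dots> = 0" unfolding \<open>S - T = 0\<^sub>m n n\<close> using ij by simp
    finally show "S $$ (i,j) = T $$ (i,j)" by simp
  qed (use Sc Tc in auto)
qed

lemma mat_inv_eqI:
  assumes S: "S \<in> carrier_mat n n" and S': "S' \<in> carrier_mat n n" "S * S' = 1\<^sub>m n" "S' * S = 1\<^sub>m n"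
  shows "mat_inv n S = S'"
  unfolding mat_inv_def
proof (rule the_equality)
  fix S'' assume "S'' \<in> carrier_mat n n \<and> S * S'' = 1\<^sub>m n \<and> S'' * S = 1\<^sub>m n"
  then have S'': "S'' \<in> carrier_mat n n" "S'' * S = 1\<^sub>m n" by auto
  have "S'' = S'' * (S * S')" using S' S'' by simp
  also have "\<dots> = (S'' * S) * S'" using assoc_mult_mat[OF S''(1) S S'(1)] by simp
  also have "\<dots> = S'" using S'' S' by simp
  finally show "S'' = S'" .
qed (use S' in auto)

lemma pd_sqrt_eqI:
  assumes "pos_def_mat n S" and "S * S = A"
  shows "pd_sqrt n A = S"
  unfolding pd_sqrt_def
  by (rule the_equality) (use assms pos_def_mat_sqrt_unique in auto)

lemma block_mat_carrier [simp]: "block_mat d c0 v c1 \<in> carrier_mat (d+1) (d+1)"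
  unfolding block_mat_eq_bordered_mat by (rule bordered_mat_carrier)

lemma block_mat_dim [simp]:
  "dim_row (block_mat d c0 v c1) = d+1" "dim_col (block_mat d c0 v c1) = d+1"
  unfolding block_mat_eq_bordered_mat by simp_all

lemma block_mat_mult_vec_of_real:
  fixes z :: "'a::real_field vec"
  assumes "z \<in> carrier_vec (d+1)" and "i < d+1"
  shows "(map_mat of_real (block_mat d c0 v c1) *\<^sub>v z) $ i =
    (if i < d then of_real c0 * z$i - 2 * of_real (v$i) * z$d
     else 2 * of_real c1 * z$d - 2 * (\<Sum>j<d. of_real (v$j) * z$j))"
  using bordered_mat_mult_vec_of_real[OF assms, of c0 0 v "-2" "2 * c1"]
  unfolding block_mat_eq_bordered_mat by simp

lemma block_mat_quadratic_form:
  assumes "z \<in> carrier_vec (d+1)"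
  shows "z \<bullet> (block_mat d c0 v c1 *\<^sub>v z)
    = c0 * (\<Sum>i<d. (z$i)\<^sup>2) - 4 * z$d * (\<Sum>i<d. v$i * z$i) + 2 * c1 * (z$d)\<^sup>2"
  unfolding block_mat_eq_bordered_mat bordered_mat_quadratic_form[OF assms] by simp

lemma pos_def_block_mat_params:
  assumes d: "d > 0" and v: "v \<in> carrier_vec d" and pd: "pos_def_mat (d+1) (block_mat d c0 v c1)"
  shows "c0 > 0" and "2 * (v \<bullet> v) < c0 * c1"
proof -
  have qf_pos: "z \<bullet> (block_mat d c0 v c1 *\<^sub>v z) > 0" if "z \<in> carrier_vec (d+1)" "z \<noteq> 0\<^sub>v (d+1)" for z
    using pd that by (simp add: pos_def_mat_def)
  define e :: "real vec" where "e = unit_vec (d+1) 0"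
  have e: "e \<in> carrier_vec (d+1)" "e \<noteq> 0\<^sub>v (d+1)" "e$d = 0"
    using d unfolding e_def by auto
  have "(\<Sum>i<d. (e$i)\<^sup>2) = (\<Sum>i<d. if i = 0 then 1 else 0)"
    unfolding e_def by (intro sum.cong) auto
  also have "\<dots> = 1" using d by simp
  finally have "e \<bullet> (block_mat d c0 v c1 *\<^sub>v e) = c0"
    unfolding block_mat_quadratic_form[OF e(1)] e(3) by simp
  then show c0: "c0 > 0" using qf_pos[OF e(1,2)] by simp
  define z where "z = vec (d+1) (\<lambda>i. if i < d then 2 * v$i else c0)"
  have z: "z \<in> carrier_vec (d+1)" "z$d = c0" unfolding z_def by auto
  have "z \<noteq> 0\<^sub>v (d+1)"
  proof
    assume "z = 0\<^sub>v (d+1)"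
    then have "z$d = 0" by simp
    with z(2) c0 show False by simp
  qed
  have "(\<Sum>i<d. (z$i)\<^sup>2) = 4 * (v \<bullet> v)" "(\<Sum>i<d. v$i * z$i) = 2 * (v \<bullet> v)"
    unfolding z_def scalar_prod_eq_sum_lessThan[OF v v]
    by (simp_all add: sum_distrib_left power2_eq_square algebra_simps)
  then have "z \<bullet> (block_mat d c0 v c1 *\<^sub>v z) = c0 * (2 * c0 * c1 - 4 * (v \<bullet> v))"
    unfolding block_mat_quadratic_form[OF z(1)] z(2) by (simp add: power2_eq_square algebra_simps)
  with qf_pos[OF z(1) \<open>z \<noteq> 0\<^sub>v (d+1)\<close>] c0 show "2 * (v \<bullet> v) < c0 * c1"
    by (simp add: zero_less_mult_iff)
qed

lemma block_mat_quadratic_form_nonneg: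
  assumes v: "v \<in> carrier_vec d" and c0: "c0 > 0" and schur: "2 * (v \<bullet> v) \<le> c0 * c1"
    and z: "z \<in> carrier_vec (d+1)"
  shows "z \<bullet> (block_mat d c0 v c1 *\<^sub>v z) \<ge> 0"
proof -
  define X Y t where "X = (\<Sum>i<d. (z$i)\<^sup>2)" and "Y = (\<Sum>i<d. v$i * z$i)" and "t = z$d"
  have "(\<Sum>i<d. (c0 * z$i - 2 * t * v$i)\<^sup>2) = c0\<^sup>2 * X - 4 * c0 * t * Y + 4 * t\<^sup>2 * (v \<bullet> v)"
    unfolding sum_square_diff X_def Y_def scalar_prod_eq_sum_lessThan[OF v v]
    by (simp add: power_mult_distrib sum_distrib_left power2_eq_square algebra_simps)
  then have "c0 * (z \<bullet> (block_mat d c0 v c1 *\<^sub>v z))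
      = (\<Sum>i<d. (c0 * z$i - 2 * t * v$i)\<^sup>2) + 2 * t\<^sup>2 * (c0 * c1 - 2 * (v \<bullet> v))"
    unfolding block_mat_quadratic_form[OF z] X_def Y_def t_def by (simp add: algebra_simps power2_eq_square)
  also have "\<dots> \<ge> 0" using schur by (simp add: sum_nonneg)
  finally show ?thesis using c0 by (simp add: zero_le_mult_iff)
qed

(* The entries of the square root (M + delta Id) / tau = [k, w sqrt n; w sqrt n, r] of the positive
   definite 2x2 matrix M = [alpha0, -2 sqrt n; -2 sqrt n, 2 alpha1], where delta = sqrt (det M) and
   tau = sqrt (tr M + 2 delta). *)
lemma sqrt_2x2_params:
  fixes \<alpha>0 \<alpha>1 n :: real
  assumes \<alpha>0: "\<alpha>0 > 0" and n: "n \<ge> 0" and det: "2 * n < \<alpha>0 * \<alpha>1"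
  obtains k r w \<delta> where "k > 0" "r > 0" "\<delta> > 0" "k\<^sup>2 + w\<^sup>2 * n = \<alpha>0" "k * r = w\<^sup>2 * n + \<delta>"
    "w\<^sup>2 * n + r\<^sup>2 = 2 * \<alpha>1" "w * (k + r) = -2"
proof -
  define \<delta> where "\<delta> = sqrt (2 * \<alpha>0 * \<alpha>1 - 4 * n)"
  define \<tau> where "\<tau> = sqrt (\<alpha>0 + 2 * \<alpha>1 + 2 * \<delta>)"
  define k r w where "k = (\<alpha>0 + \<delta>) / \<tau>" and "r = (2 * \<alpha>1 + \<delta>) / \<tau>" and "w = -2 / \<tau>"
  have \<alpha>1: "\<alpha>1 > 0" using det \<alpha>0 n by (smt (verit) zero_less_mult_iff)
  have \<delta>: "\<delta> > 0" "\<delta>\<^sup>2 = 2 * \<alpha>0 * \<alpha>1 - 4 * n" using det unfolding \<delta>_def by auto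
  have \<tau>: "\<tau> > 0" "\<tau>\<^sup>2 = \<alpha>0 + 2 * \<alpha>1 + 2 * \<delta>" using \<alpha>0 \<alpha>1 \<delta> unfolding \<tau>_def by auto
  have k: "k > 0" and r: "r > 0" using \<alpha>0 \<alpha>1 \<delta> \<tau> unfolding k_def r_def by auto
  have kk: "k\<^sup>2 + w\<^sup>2 * n = \<alpha>0"
  proof -
    have "(\<alpha>0 + \<delta>)\<^sup>2 + 4 * n = \<alpha>0 * \<tau>\<^sup>2"
      unfolding \<tau>(2) using \<delta>(2) by (simp add: power2_eq_square algebra_simps)
    then show ?thesis using \<tau>(1) unfolding k_def w_def by (simp add: field_simps)
  qed
  have kr: "k * r = w\<^sup>2 * n + \<delta>"
  proof -
    have "(\<alpha>0 + \<delta>) * (2 * \<alpha>1 + \<delta>) = 4 * n + \<delta> * \<tau>\<^sup>2"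
      unfolding \<tau>(2) using \<delta>(2) by (simp add: power2_eq_square algebra_simps)
    then show ?thesis using \<tau>(1) unfolding k_def r_def w_def by (simp add: field_simps power2_eq_square)
  qed
  have rr: "w\<^sup>2 * n + r\<^sup>2 = 2 * \<alpha>1"
  proof -
    have "4 * n + (2 * \<alpha>1 + \<delta>)\<^sup>2 = 2 * \<alpha>1 * \<tau>\<^sup>2"
      unfolding \<tau>(2) using \<delta>(2) by (simp add: power2_eq_square algebra_simps)
    then show ?thesis using \<tau>(1) unfolding r_def w_def by (simp add: field_simps)
  qed
  have wkr: "w * (k + r) = -2"
  proof -
    have "(k + r) * \<tau> = \<tau>\<^sup>2" using \<tau> unfolding k_def r_def by (simp add: field_simps)
    then have "k + r = \<tau>" using \<tau> by (simp add: power2_eq_square)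
    then show ?thesis using \<tau> unfolding w_def by simp
  qed
  show ?thesis by (rule that[OF k r \<delta>(1) kk kr rr wkr])
qed

(* On the orthogonal complement of a the square root acts as sqrt alpha0; on the plane spanned by a
   and the last axis it is the 2x2 square root above, which determines u through p + u |a|^2 = k. *)
lemma block_mat_sqrt_exists:
  assumes a: "a \<in> carrier_vec d" and \<alpha>0: "\<alpha>0 > 0" and schur: "2 * (a \<bullet> a) < \<alpha>0 * \<alpha>1"
  shows "\<exists>S. pos_def_mat (d+1) S \<and> S * S = block_mat d \<alpha>0 a \<alpha>1"
proof -
  define n where "n = a \<bullet> a"
  have n: "n \<ge> 0" using a unfolding n_def by (rule scalar_prod_self_nonneg)
  obtain k r w \<delta> where k: "k > 0" and r: "r > 0" and \<delta>: "\<delta> > 0" and kk: "k\<^sup>2 + w\<^sup>2 * n = \<alpha>0"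
    and kr: "k * r = w\<^sup>2 * n + \<delta>" and rr: "w\<^sup>2 * n + r\<^sup>2 = 2 * \<alpha>1" and wkr: "w * (k + r) = -2"
    by (rule sqrt_2x2_params[OF \<alpha>0 n schur[folded n_def]])
  define p u where "p = sqrt \<alpha>0" and "u = (k - p) / n"
  have p: "p > 0" "p\<^sup>2 = \<alpha>0" using \<alpha>0 unfolding p_def by auto
  define S where "S = bordered_mat d p u a w r"
  have SS: "S * S = bordered_mat d (p\<^sup>2) (2 * p * u + u\<^sup>2 * n + w\<^sup>2) a (w * (p + u * n + r)) (w\<^sup>2 * n + r\<^sup>2)"
    unfolding S_def n_def by (rule bordered_mat_square[OF a])
  have "S * S = block_mat d \<alpha>0 a \<alpha>1"
  proof (cases "n = 0")
    case True
    then have "a = 0\<^sub>v d" unfolding n_def by (rule scalar_prod_self_eq_0[OF a])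
    then show ?thesis
      unfolding SS block_mat_eq_bordered_mat p(2) rr by (simp only: bordered_mat_zero_vec)
  next
    case False
    then have un: "u * n = k - p" unfolding u_def by simp
    have "n * (2 * p * u + u\<^sup>2 * n + w\<^sup>2) = (p + u * n)\<^sup>2 - p\<^sup>2 + w\<^sup>2 * n"
      by (simp add: power2_eq_square algebra_simps)
    also have "\<dots> = 0" using kk p un by simp
    finally have "2 * p * u + u\<^sup>2 * n + w\<^sup>2 = 0" using False by simp
    moreover have "w * (p + u * n + r) = -2" using un wkr by simp
    ultimately show ?thesis unfolding SS block_mat_eq_bordered_mat p(2) rr by simp
  qed
  moreover have "pos_def_mat (d+1) S"
  proof (cases "n = 0")
    case True
    then show ?thesis unfolding S_def using a p r by (intro bordered_mat_pos_def) (auto simp: n_def)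
  next
    case False
    then have "p + u * n = k" unfolding u_def by simp
    then show ?thesis unfolding S_def using a p k kr \<delta> by (intro bordered_mat_pos_def) (auto simp: n_def)
  qed
  ultimately show ?thesis by blast
qed

section \<open>The pencil B - c A of two block matrices\<close>

lemma block_pencil_eigen_iff:
  fixes w :: "'a::real_field vec"
  assumes w: "w \<in> carrier_vec (d+1)"
  shows "map_mat of_real (block_mat d \<beta>0 b \<beta>1) *\<^sub>v w = c \<cdot>\<^sub>v (map_mat of_real (block_mat d \<alpha>0 a \<alpha>1) *\<^sub>v w)
    \<longleftrightarrow> (\<forall>i<d. (of_real \<beta>0 - c * of_real \<alpha>0) * w$i = 2 * (of_real (b$i) - c * of_real (a$i)) * w$d)
      \<and> (\<Sum>i<d. (of_real (b$i) - c * of_real (a$i)) * w$i) = (of_real \<beta>1 - c * of_real \<alpha>1) * w$d"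
    (is "?B *\<^sub>v w = c \<cdot>\<^sub>v (?A *\<^sub>v w) \<longleftrightarrow> ?top \<and> ?last")
proof -
  have "?B *\<^sub>v w = c \<cdot>\<^sub>v (?A *\<^sub>v w) \<longleftrightarrow> (\<forall>i<d+1. (?B *\<^sub>v w) $ i = c * (?A *\<^sub>v w) $ i)"
    by (auto simp: vec_eq_iff simp del: index_mult_mat_vec)
  also have "\<dots> \<longleftrightarrow> (\<forall>i<d. (?B *\<^sub>v w) $ i = c * (?A *\<^sub>v w) $ i) \<and> (?B *\<^sub>v w) $ d = c * (?A *\<^sub>v w) $ d"
    by (auto simp: less_Suc_eq)
  also have "(\<forall>i<d. (?B *\<^sub>v w) $ i = c * (?A *\<^sub>v w) $ i) \<longleftrightarrow> ?top"
    using w by (simp add: block_mat_mult_vec_of_real algebra_simps del: index_mult_mat_vec)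
  also have "(?B *\<^sub>v w) $ d = c * (?A *\<^sub>v w) $ d \<longleftrightarrow> ?last"
  proof -
    have "(?B *\<^sub>v w) $ d - c * (?A *\<^sub>v w) $ d = - 2 * ((\<Sum>i<d. (of_real (b$i) - c * of_real (a$i)) * w$i)
        - (of_real \<beta>1 - c * of_real \<alpha>1) * w$d)"
      using w by (simp add: block_mat_mult_vec_of_real sum_subtractf sum_distrib_left sum_negf
          algebra_simps del: index_mult_mat_vec)
    then show ?thesis unfolding eq_iff_diff_eq_0[of "(?B *\<^sub>v w) $ d"] by (auto simp del: index_mult_mat_vec)
  qed
  finally show ?thesis .
qed

(* For A = block_mat d \<alpha>0 a \<alpha>1 and B = block_mat d \<beta>0 b \<beta>1 one has
   B - c A = block_mat d (\<beta>0 - c \<alpha>0) (b - c a) (\<beta>1 - c \<alpha>1), and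
   det (block_mat d c0 v c1) = c0^(d-1) * (2 c0 c1 - 4 |v|^2);
   so this is det (B - c A) / (\<beta>0 - c \<alpha>0)^(d-1). *)
definition pencil_poly :: "real \<Rightarrow> real vec \<Rightarrow> real \<Rightarrow> real \<Rightarrow> real vec \<Rightarrow> real \<Rightarrow> 'a::real_field \<Rightarrow> 'a"
  where "pencil_poly \<alpha>0 a \<alpha>1 \<beta>0 b \<beta>1 c =
    2 * (of_real \<beta>0 - c * of_real \<alpha>0) * (of_real \<beta>1 - c * of_real \<alpha>1)
    - 4 * (of_real (b \<bullet> b) - 2 * c * of_real (a \<bullet> b) + c\<^sup>2 * of_real (a \<bullet> a))"

lemma pencil_poly_eq_sum:
  assumes a: "a \<in> carrier_vec d" and b: "b \<in> carrier_vec d"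
  shows "pencil_poly \<alpha>0 a \<alpha>1 \<beta>0 b \<beta>1 c =
    2 * (of_real \<beta>0 - c * of_real \<alpha>0) * (of_real \<beta>1 - c * of_real \<alpha>1)
    - 4 * (\<Sum>i<d. (of_real (b$i) - c * of_real (a$i))\<^sup>2)"
  unfolding pencil_poly_def sum_square_diff scalar_prod_eq_sum_lessThan[OF a a]
    scalar_prod_eq_sum_lessThan[OF a b] scalar_prod_eq_sum_lessThan[OF b b]
  by (simp add: power2_eq_square mult.commute)

lemma pencil_poly_uminus:
  assumes "a \<in> carrier_vec d" and "b \<in> carrier_vec d"
  shows "pencil_poly \<alpha>0 a \<alpha>1 (- \<beta>0) (- b) (- \<beta>1) c = pencil_poly \<alpha>0 a \<alpha>1 \<beta>0 b \<beta>1 (- c)"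
  using assms by (simp add: pencil_poly_def algebra_simps)

lemma pencil_poly_roots:
  fixes \<Delta> lamp lamm :: real
  assumes a: "a \<in> carrier_vec d" and b: "b \<in> carrier_vec d"
    and \<alpha>0: "\<alpha>0 > 0" and schur: "2 * (a \<bullet> a) < \<alpha>0 * \<alpha>1"
    and Delta: "\<Delta> = (4 * (a \<bullet> b) - (\<beta>1 * \<alpha>0 + \<beta>0 * \<alpha>1))\<^sup>2
      - 4 * (2 * (a \<bullet> a) - \<alpha>0 * \<alpha>1) * (2 * (b \<bullet> b) - \<beta>0 * \<beta>1)"
    and lamp: "lamp = ((- 4 * (a \<bullet> b) + (\<beta>1 * \<alpha>0 + \<beta>0 * \<alpha>1)) + sqrt \<Delta>) / (4 * (a \<bullet> a) - 2 * \<alpha>0 * \<alpha>1)"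
    and lamm: "lamm = ((- 4 * (a \<bullet> b) + (\<beta>1 * \<alpha>0 + \<beta>0 * \<alpha>1)) - sqrt \<Delta>) / (4 * (a \<bullet> a) - 2 * \<alpha>0 * \<alpha>1)"
  shows "\<Delta> \<ge> 0"
    and "pencil_poly \<alpha>0 a \<alpha>1 \<beta>0 b \<beta>1 c
      = of_real (2 * \<alpha>0 * \<alpha>1 - 4 * (a \<bullet> a)) * (c + of_real lamp) * (c + of_real lamm)"
proof -
  define K H N where "K = 2 * \<alpha>0 * \<alpha>1 - 4 * (a \<bullet> a)" and "H = 4 * (a \<bullet> b) - (\<beta>1 * \<alpha>0 + \<beta>0 * \<alpha>1)"
    and "N = 2 * \<beta>0 * \<beta>1 - 4 * (b \<bullet> b)"
  have K: "K > 0" using schur unfolding K_def by simp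
  have coeffs: "pencil_poly \<alpha>0 a \<alpha>1 \<beta>0 b \<beta>1 x = of_real K * x\<^sup>2 + 2 * of_real H * x + of_real N"
    for x :: "'b::real_field"
    unfolding pencil_poly_def K_def H_def N_def by (simp add: power2_eq_square algebra_simps)
  have disc: "\<Delta> = H\<^sup>2 - K * N" unfolding Delta K_def H_def N_def by (simp add: algebra_simps)
  define x0 where "x0 = \<beta>0 / \<alpha>0"
  have "pencil_poly \<alpha>0 a \<alpha>1 \<beta>0 b \<beta>1 x0 = - 4 * (\<Sum>i<d. (b$i - x0 * a$i)\<^sup>2)"
    unfolding pencil_poly_eq_sum[OF a b] x0_def using \<alpha>0 by simp
  also have "\<dots> \<le> 0" by (simp add: sum_nonneg)
  finally have "K * (K * x0\<^sup>2 + 2 * H * x0 + N) \<le> 0"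
    unfolding coeffs using K by (simp add: mult_nonneg_nonpos)
  then have "(K * x0 + H)\<^sup>2 \<le> \<Delta>" unfolding disc by (simp add: power2_eq_square algebra_simps)
  then show \<Delta>: "\<Delta> \<ge> 0" by (smt (verit) zero_le_power2)
  have "lamp = (H - sqrt \<Delta>) / K" "lamm = (H + sqrt \<Delta>) / K"
    unfolding lamp lamm H_def K_def using K unfolding K_def by (simp_all add: field_simps)
  then have lp: "K * lamp = H - sqrt \<Delta>" and lm: "K * lamm = H + sqrt \<Delta>" using K by simp_all
  then have sum: "K * (lamp + lamm) = 2 * H" by (simp add: distrib_left)
  have "K * (K * (lamp * lamm)) = (H - sqrt \<Delta>) * (H + sqrt \<Delta>)"
    unfolding lp[symmetric] lm[symmetric] by (simp add: algebra_simps)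
  also have "\<dots> = K * N" using \<Delta> unfolding disc by (simp add: power2_eq_square algebra_simps)
  finally have prod: "K * (lamp * lamm) = N" using K by simp
  have "2 * of_real H = (of_real K * (of_real lamp + of_real lamm) :: 'a)"
    unfolding of_real_add[symmetric] of_real_mult[symmetric] sum by simp
  moreover have "of_real N = (of_real K * of_real lamp * of_real lamm :: 'a)"
    unfolding of_real_mult[symmetric] prod[symmetric] by (simp add: mult.assoc)
  ultimately show "pencil_poly \<alpha>0 a \<alpha>1 \<beta>0 b \<beta>1 c = of_real K * (c + of_real lamp) * (c + of_real lamm)"
    unfolding coeffs by (simp add: power2_eq_square algebra_simps)
qed

lemma block_pencil_eigenvalue_cases:
  fixes w :: "'a::real_field vec" and c :: 'a
  assumes a: "a \<in> carrier_vec d" and b: "b \<in> carrier_vec d"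
    and w: "w \<in> carrier_vec (d+1)" "w \<noteq> 0\<^sub>v (d+1)"
    and eig: "map_mat of_real (block_mat d \<beta>0 b \<beta>1) *\<^sub>v w = c \<cdot>\<^sub>v (map_mat of_real (block_mat d \<alpha>0 a \<alpha>1) *\<^sub>v w)"
  shows "c * of_real \<alpha>0 = of_real \<beta>0 \<or> pencil_poly \<alpha>0 a \<alpha>1 \<beta>0 b \<beta>1 c = 0"
proof (cases "c * of_real \<alpha>0 = of_real \<beta>0")
  case False
  then have c0: "of_real \<beta>0 - c * of_real \<alpha>0 \<noteq> 0" by simp
  define v c1 t where "v i = of_real (b$i) - c * of_real (a$i)" and "c1 = of_real \<beta>1 - c * of_real \<alpha>1"
    and "t = w$d" for i
  have "(\<forall>i<d. (of_real \<beta>0 - c * of_real \<alpha>0) * w$i = 2 * v i * t) \<and> (\<Sum>i<d. v i * w$i) = c1 * t"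
    using eig unfolding block_pencil_eigen_iff[OF w(1)] v_def c1_def t_def .
  then have top: "\<And>i. i < d \<Longrightarrow> (of_real \<beta>0 - c * of_real \<alpha>0) * w$i = 2 * v i * t"
    and last: "(\<Sum>i<d. v i * w$i) = c1 * t" by auto
  have "t \<noteq> 0"
  proof
    assume "t = 0"
    with top c0 have "\<forall>i<d. w$i = 0" by simp
    with \<open>t = 0\<close> w have "w = 0\<^sub>v (d+1)" unfolding t_def by (intro eq_vecI) (auto simp: less_Suc_eq)
    with w(2) show False ..
  qed
  have "t * ((of_real \<beta>0 - c * of_real \<alpha>0) * c1) = (of_real \<beta>0 - c * of_real \<alpha>0) * (\<Sum>i<d. v i * w$i)"
    unfolding last by (simp add: algebra_simps)
  also have "\<dots> = (\<Sum>i<d. v i * ((of_real \<beta>0 - c * of_real \<alpha>0) * w$i))"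
    by (simp add: sum_distrib_left algebra_simps)
  also have "\<dots> = (\<Sum>i<d. v i * (2 * v i * t))"
    by (intro sum.cong) (simp_all add: top)
  also have "\<dots> = t * (2 * (\<Sum>i<d. (v i)\<^sup>2))"
    by (simp add: sum_distrib_left power2_eq_square algebra_simps)
  finally have schur: "(of_real \<beta>0 - c * of_real \<alpha>0) * c1 = 2 * (\<Sum>i<d. (v i)\<^sup>2)"
    using \<open>t \<noteq> 0\<close> by simp
  have "pencil_poly \<alpha>0 a \<alpha>1 \<beta>0 b \<beta>1 c = 2 * ((of_real \<beta>0 - c * of_real \<alpha>0) * c1) - 4 * (\<Sum>i<d. (v i)\<^sup>2)"
    unfolding pencil_poly_eq_sum[OF a b] v_def c1_def by (simp add: mult.assoc)
  also have "\<dots> = 0" unfolding schur by (simp flip: mult.assoc)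
  finally show ?thesis by (rule disjI2)
qed simp

lemma block_pencil_eigenvector_exists:
  fixes l :: real
  assumes d: "d \<ge> 2" and a: "a \<in> carrier_vec d" and b: "b \<in> carrier_vec d"
    and l: "l * \<alpha>0 = \<beta>0 \<or> pencil_poly \<alpha>0 a \<alpha>1 \<beta>0 b \<beta>1 l = 0"
  obtains w where "w \<in> carrier_vec (d+1)" "w \<noteq> 0\<^sub>v (d+1)"
    "block_mat d \<beta>0 b \<beta>1 *\<^sub>v w = l \<cdot>\<^sub>v (block_mat d \<alpha>0 a \<alpha>1 *\<^sub>v w)"
proof -
  define u where "u i = b$i - l * a$i" for i
  have eig_iff: "block_mat d \<beta>0 b \<beta>1 *\<^sub>v w = l \<cdot>\<^sub>v (block_mat d \<alpha>0 a \<alpha>1 *\<^sub>v w) \<longleftrightarrow>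
      (\<forall>i<d. (\<beta>0 - l * \<alpha>0) * w$i = 2 * u i * w$d) \<and> (\<Sum>i<d. u i * w$i) = (\<beta>1 - l * \<alpha>1) * w$d"
    if "w \<in> carrier_vec (d+1)" for w
    using block_pencil_eigen_iff[OF that, of \<beta>0 b \<beta>1 l \<alpha>0 a \<alpha>1] unfolding map_mat_of_real_real u_def
    by simp
  show ?thesis
  proof (cases "l * \<alpha>0 = \<beta>0")
    case True
    \<comment> \<open>any nonzero x orthogonal to u gives the eigenvector (x, 0); this is where d \<ge> 2 is needed\<close>
    define x0 x1 where "x0 = (if u 0 = 0 \<and> u 1 = 0 then 1 else u 1)"
      and "x1 = (if u 0 = 0 \<and> u 1 = 0 then 0 else - u 0)"
    define w where "w = vec (d+1) (\<lambda>i. if i = 0 then x0 else if i = 1 then x1 else 0)"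
    have wc: "w \<in> carrier_vec (d+1)" and wd: "w$d = 0" unfolding w_def using d by auto
    have "w$0 \<noteq> 0 \<or> w$1 \<noteq> 0" unfolding w_def x0_def x1_def using d by auto
    then have "w \<noteq> 0\<^sub>v (d+1)" using d by auto
    moreover have "(\<Sum>i<d. u i * w$i) = (\<Sum>i\<in>{0,1}. u i * w$i)"
      using d by (intro sum.mono_neutral_right) (auto simp: w_def)
    then have "(\<Sum>i<d. u i * w$i) = 0" unfolding w_def x0_def x1_def using d by simp
    ultimately show ?thesis using that[OF wc] True wd unfolding eig_iff[OF wc] by simp
  next
    case False
    then have c0: "\<beta>0 - l * \<alpha>0 \<noteq> 0" by simp
    from False l have pp: "(\<beta>0 - l * \<alpha>0) * (\<beta>1 - l * \<alpha>1) = 2 * (\<Sum>i<d. (u i)\<^sup>2)"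
      unfolding pencil_poly_eq_sum[OF a b] u_def by (simp add: algebra_simps)
    define w where "w = vec (d+1) (\<lambda>i. if i < d then 2 * u i / (\<beta>0 - l * \<alpha>0) else 1)"
    have wc: "w \<in> carrier_vec (d+1)" and wd: "w$d = 1" unfolding w_def by auto
    then have "w \<noteq> 0\<^sub>v (d+1)" by auto
    moreover have "(\<beta>0 - l * \<alpha>0) * w$i = 2 * u i * w$d" if "i < d" for i
      using c0 that unfolding w_def by simp
    moreover have "(\<Sum>i<d. u i * w$i) = (\<beta>1 - l * \<alpha>1) * w$d"
    proof -
      have "(\<Sum>i<d. u i * w$i) = (\<Sum>i<d. 2 * (u i)\<^sup>2 / (\<beta>0 - l * \<alpha>0))"
        unfolding w_def by (intro sum.cong) (simp_all add: power2_eq_square)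
      also have "\<dots> = (\<beta>1 - l * \<alpha>1)"
        using c0 pp by (simp add: sum_divide_distrib[symmetric] sum_distrib_left[symmetric] field_simps)
      finally show ?thesis using wd by simp
    qed
    ultimately show ?thesis using that[OF wc] unfolding eig_iff[OF wc] by blast
  qed
qed

lemma block_mat_quadratic_form_uminus:
  assumes "v \<in> carrier_vec d" and "z \<in> carrier_vec (d+1)"
  shows "z \<bullet> (block_mat d (- c0) (- v) (- c1) *\<^sub>v z) = - (z \<bullet> (block_mat d c0 v c1 *\<^sub>v z))"
proof -
  have "(\<Sum>i<d. (- v)$i * z$i) = - (\<Sum>i<d. v$i * z$i)"
    using assms(1) by (simp add: sum_negf)
  then show ?thesis unfolding block_mat_quadratic_form[OF assms(2)] by simp
qed

lemma block_pencil_quadratic_form_le: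
  fixes \<mu> :: real
  assumes a: "a \<in> carrier_vec d" and b: "b \<in> carrier_vec d" and z: "z \<in> carrier_vec (d+1)"
    and \<mu>: "\<mu> * \<alpha>0 > \<beta>0" and pp: "pencil_poly \<alpha>0 a \<alpha>1 \<beta>0 b \<beta>1 \<mu> \<ge> 0"
  shows "z \<bullet> (block_mat d \<beta>0 b \<beta>1 *\<^sub>v z) \<le> \<mu> * (z \<bullet> (block_mat d \<alpha>0 a \<alpha>1 *\<^sub>v z))"
proof -
  define v where "v = vec d (\<lambda>i. \<mu> * a$i - b$i)"
  have v: "v \<in> carrier_vec d" unfolding v_def by simp
  have Y: "(\<Sum>i<d. v$i * z$i) = \<mu> * (\<Sum>i<d. a$i * z$i) - (\<Sum>i<d. b$i * z$i)"
    unfolding v_def by (simp add: sum_subtractf sum_distrib_left algebra_simps)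
  have diff: "\<mu> * (z \<bullet> (block_mat d \<alpha>0 a \<alpha>1 *\<^sub>v z)) - z \<bullet> (block_mat d \<beta>0 b \<beta>1 *\<^sub>v z)
      = z \<bullet> (block_mat d (\<mu> * \<alpha>0 - \<beta>0) v (\<mu> * \<alpha>1 - \<beta>1) *\<^sub>v z)"
    unfolding block_mat_quadratic_form[OF z] Y by (simp add: algebra_simps)
  have "v \<bullet> v = (\<Sum>i<d. (b$i - \<mu> * a$i)\<^sup>2)"
    unfolding scalar_prod_eq_sum_lessThan[OF v v]
    by (intro sum.cong) (simp_all add: v_def power2_eq_square algebra_simps)
  then have "2 * (v \<bullet> v) \<le> (\<mu> * \<alpha>0 - \<beta>0) * (\<mu> * \<alpha>1 - \<beta>1)"
    using pp unfolding pencil_poly_eq_sum[OF a b] by (simp add: algebra_simps)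
  then have "z \<bullet> (block_mat d (\<mu> * \<alpha>0 - \<beta>0) v (\<mu> * \<alpha>1 - \<beta>1) *\<^sub>v z) \<ge> 0"
    using \<mu> by (intro block_mat_quadratic_form_nonneg[OF v _ _ z]) auto
  with diff show ?thesis by simp
qed

section \<open>Congruence, spectra and Rayleigh quotients\<close>

lemma mult_mat_vec_assoc3:
  assumes "A \<in> carrier_mat n n" "B \<in> carrier_mat n n" "C \<in> carrier_mat n n" "x \<in> carrier_vec n"
  shows "(A * B * C) *\<^sub>v x = A *\<^sub>v (B *\<^sub>v (C *\<^sub>v x))"
proof -
  have "(A * B * C) *\<^sub>v x = (A * B) *\<^sub>v (C *\<^sub>v x)"
    by (rule assoc_mult_mat_vec[of "A * B" n n C n x]) (use assms in auto)
  also have "\<dots> = A *\<^sub>v (B *\<^sub>v (C *\<^sub>v x))"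
    by (rule assoc_mult_mat_vec[of A n n B n]) (use assms in auto)
  finally show ?thesis .
qed

lemma congruence_eigenvector_imp_pencil:
  fixes S S' B :: "'a::field mat"
  assumes S: "S \<in> carrier_mat n n" and S': "S' \<in> carrier_mat n n" and B: "B \<in> carrier_mat n n"
    and inv: "S * S' = 1\<^sub>m n"
    and v: "v \<in> carrier_vec n" "v \<noteq> 0\<^sub>v n" and eig: "(S' * B * S') *\<^sub>v v = c \<cdot>\<^sub>v v"
  shows "S' *\<^sub>v v \<noteq> 0\<^sub>v n" and "B *\<^sub>v (S' *\<^sub>v v) = c \<cdot>\<^sub>v ((S * S) *\<^sub>v (S' *\<^sub>v v))"
proof -
  have cancel: "S *\<^sub>v (S' *\<^sub>v x) = x" if "x \<in> carrier_vec n" for x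
    using assoc_mult_mat_vec[OF S S' that] inv that by simp
  show "S' *\<^sub>v v \<noteq> 0\<^sub>v n"
  proof
    assume "S' *\<^sub>v v = 0\<^sub>v n"
    then have "v = S *\<^sub>v 0\<^sub>v n" using cancel[OF v(1)] by simp
    with S v(2) show False by auto
  qed
  have Bw: "B *\<^sub>v (S' *\<^sub>v v) \<in> carrier_vec n" using B S' v by simp
  have "B *\<^sub>v (S' *\<^sub>v v) = S *\<^sub>v (S' *\<^sub>v (B *\<^sub>v (S' *\<^sub>v v)))" using cancel[OF Bw] by simp
  also have "\<dots> = S *\<^sub>v (c \<cdot>\<^sub>v v)" using eig unfolding mult_mat_vec_assoc3[OF S' B S' v(1)] by simp
  also have "\<dots> = c \<cdot>\<^sub>v (S *\<^sub>v v)" by (rule mult_mat_vec[OF S v(1)])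
  also have "S *\<^sub>v v = (S * S) *\<^sub>v (S' *\<^sub>v v)"
    using S S' v cancel[OF v(1)] by simp
  finally show "B *\<^sub>v (S' *\<^sub>v v) = c \<cdot>\<^sub>v ((S * S) *\<^sub>v (S' *\<^sub>v v))" .
qed

lemma pencil_eigenvector_imp_congruence:
  fixes S S' B :: "'a::field mat"
  assumes S: "S \<in> carrier_mat n n" and S': "S' \<in> carrier_mat n n" and B: "B \<in> carrier_mat n n"
    and inv: "S' * S = 1\<^sub>m n"
    and w: "w \<in> carrier_vec n" "w \<noteq> 0\<^sub>v n" and eig: "B *\<^sub>v w = c \<cdot>\<^sub>v ((S * S) *\<^sub>v w)"
  shows "S *\<^sub>v w \<noteq> 0\<^sub>v n" and "(S' * B * S') *\<^sub>v (S *\<^sub>v w) = c \<cdot>\<^sub>v (S *\<^sub>v w)"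
proof -
  have cancel: "S' *\<^sub>v (S *\<^sub>v x) = x" if "x \<in> carrier_vec n" for x
    using assoc_mult_mat_vec[OF S' S that] inv that by simp
  show "S *\<^sub>v w \<noteq> 0\<^sub>v n"
  proof
    assume "S *\<^sub>v w = 0\<^sub>v n"
    then have "w = S' *\<^sub>v 0\<^sub>v n" using cancel[OF w(1)] by simp
    with S' w(2) show False by auto
  qed
  have Sw: "S *\<^sub>v w \<in> carrier_vec n" using S w by simp
  have "(S' * B * S') *\<^sub>v (S *\<^sub>v w) = S' *\<^sub>v (c \<cdot>\<^sub>v ((S * S) *\<^sub>v w))"
    unfolding mult_mat_vec_assoc3[OF S' B S' Sw] cancel[OF w(1)] eig ..
  also have "\<dots> = c \<cdot>\<^sub>v (S' *\<^sub>v ((S * S) *\<^sub>v w))" by (rule mult_mat_vec[OF S']) (use S w in simp)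
  also have "S' *\<^sub>v ((S * S) *\<^sub>v w) = S *\<^sub>v w"
    using cancel[OF Sw] assoc_mult_mat_vec[OF S S w(1)] by simp
  finally show "(S' * B * S') *\<^sub>v (S *\<^sub>v w) = c \<cdot>\<^sub>v (S *\<^sub>v w)" .
qed

lemma spectrum_of_real_congruence_imp_pencil:
  fixes S S' B :: "real mat"
  assumes S: "S \<in> carrier_mat n n" and S': "S' \<in> carrier_mat n n" and B: "B \<in> carrier_mat n n"
    and inv: "S * S' = 1\<^sub>m n" and c: "c \<in> spectrum (map_mat complex_of_real (S' * B * S'))"
  obtains w where "w \<in> carrier_vec n" "w \<noteq> 0\<^sub>v n"
    "map_mat complex_of_real B *\<^sub>v w = c \<cdot>\<^sub>v (map_mat complex_of_real (S * S) *\<^sub>v w)"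
proof -
  let ?h = "map_mat complex_of_real"
  have hS: "?h S \<in> carrier_mat n n" and hS': "?h S' \<in> carrier_mat n n" and hB: "?h B \<in> carrier_mat n n"
    using S S' B by simp_all
  have "?h (S' * B * S') = ?h (S' * B) * ?h S'"
    by (rule of_real_hom.mat_hom_mult[of _ n n]) (use S' B in simp_all)
  also have "?h (S' * B) = ?h S' * ?h B" by (rule of_real_hom.mat_hom_mult[OF S' B])
  finally have hM: "?h (S' * B * S') = ?h S' * ?h B * ?h S'" .
  have hSS: "?h (S * S) = ?h S * ?h S" by (rule of_real_hom.mat_hom_mult[OF S S])
  have hinv: "?h S * ?h S' = 1\<^sub>m n"
    using of_real_hom.mat_hom_mult[OF S S'] unfolding inv of_real_hom.mat_hom_one by (rule sym)
  from c obtain v where v: "v \<in> carrier_vec n" "v \<noteq> 0\<^sub>v n" "?h (S' * B * S') *\<^sub>v v = c \<cdot>\<^sub>v v"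
    using S' by (auto simp: spectrum_def eigenvalue_def eigenvector_def)
  note cong = congruence_eigenvector_imp_pencil[OF hS hS' hB hinv v(1,2) v(3)[unfolded hM]]
  show ?thesis
  proof (rule that)
    show "?h S' *\<^sub>v v \<in> carrier_vec n" using hS' v(1) by simp
  qed (use cong hSS in simp_all)
qed

lemma pencil_eigenvalue_in_spectrum_of_real:
  fixes S S' B :: "real mat"
  assumes S: "S \<in> carrier_mat n n" and S': "S' \<in> carrier_mat n n" and B: "B \<in> carrier_mat n n"
    and inv: "S' * S = 1\<^sub>m n"
    and w: "w \<in> carrier_vec n" "w \<noteq> 0\<^sub>v n" and eig: "B *\<^sub>v w = l \<cdot>\<^sub>v ((S * S) *\<^sub>v w)"
  shows "complex_of_real l \<in> spectrum (map_mat complex_of_real (S' * B * S'))"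
proof -
  let ?M = "S' * B * S'" and ?v = "S *\<^sub>v w"
  have M: "?M \<in> carrier_mat n n" and v: "?v \<in> carrier_vec n" using S S' B w by auto
  note cong = pencil_eigenvector_imp_congruence[OF S S' B inv w eig]
  have "map_mat complex_of_real ?M *\<^sub>v map_vec complex_of_real ?v = map_vec complex_of_real (?M *\<^sub>v ?v)"
    by (rule of_real_hom.mult_mat_vec_hom[OF M v, symmetric])
  also have "\<dots> = complex_of_real l \<cdot>\<^sub>v map_vec complex_of_real ?v"
    unfolding cong(2) by (rule of_real_hom.vec_hom_smult)
  finally have "eigenvector (map_mat complex_of_real ?M) (map_vec complex_of_real ?v) (complex_of_real l)"
    using cong(1) M v S' unfolding eigenvector_def by (simp add: carrier_matD)
  then show ?thesis unfolding spectrum_def eigenvalue_def by blast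
qed

lemma spectral_radius_eqI:
  assumes A: "A \<in> carrier_mat n n" and n: "n > 0"
    and le: "\<And>c. c \<in> spectrum A \<Longrightarrow> norm c \<le> r" and c: "c \<in> spectrum A" "norm c = r"
  shows "spectral_radius A = r"
proof (rule antisym)
  obtain c' where "c' \<in> spectrum A" "spectral_radius A = norm c'"
    using spectral_radius_mem_max(1)[OF A n] by auto
  with le show "spectral_radius A \<le> r" by simp
  show "r \<le> spectral_radius A" using spectral_radius_mem_max(2)[OF A n] c by auto
qed

lemma rayleigh_quotient_pencil_eigenvector:
  fixes A B :: "real mat"
  assumes A: "pos_def_mat n A" and w: "w \<in> carrier_vec n" "w \<noteq> 0\<^sub>v n"
    and eig: "B *\<^sub>v w = l \<cdot>\<^sub>v (A *\<^sub>v w)"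
  shows "\<bar>w \<bullet> (B *\<^sub>v w)\<bar> / (w \<bullet> (A *\<^sub>v w)) = \<bar>l\<bar>"
proof -
  have pos: "w \<bullet> (A *\<^sub>v w) > 0" using A w by (simp add: pos_def_mat_def)
  have Aw: "A *\<^sub>v w \<in> carrier_vec n" using pos_def_mat_carrier[OF A] w by simp
  have "w \<bullet> (B *\<^sub>v w) = l * (w \<bullet> (A *\<^sub>v w))"
    unfolding eig by (rule scalar_prod_smult_distrib[OF w(1) Aw])
  with pos show ?thesis by (simp add: abs_mult)
qed

locale block_pencil =
  fixes d :: nat and \<alpha>0 \<alpha>1 \<beta>0 \<beta>1 \<Delta> lamp lamm :: real and a b :: "real vec"
  assumes d: "d \<ge> 2" and a: "a \<in> carrier_vec d" and b: "b \<in> carrier_vec d"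
    and pos_def: "pos_def_mat (d+1) (block_mat d \<alpha>0 a \<alpha>1)"
    and Delta_def: "\<Delta> = (4 * (a \<bullet> b) - (\<beta>1 * \<alpha>0 + \<beta>0 * \<alpha>1))\<^sup>2
      - 4 * (2 * (a \<bullet> a) - \<alpha>0 * \<alpha>1) * (2 * (b \<bullet> b) - \<beta>0 * \<beta>1)"
    and lamp_def: "lamp = ((- 4 * (a \<bullet> b) + (\<beta>1 * \<alpha>0 + \<beta>0 * \<alpha>1)) + sqrt \<Delta>)
      / (4 * (a \<bullet> a) - 2 * \<alpha>0 * \<alpha>1)"
    and lamm_def: "lamm = ((- 4 * (a \<bullet> b) + (\<beta>1 * \<alpha>0 + \<beta>0 * \<alpha>1)) - sqrt \<Delta>)
      / (4 * (a \<bullet> a) - 2 * \<alpha>0 * \<alpha>1)"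
begin

lemma alpha0_pos: "\<alpha>0 > 0" and schur_pos: "2 * (a \<bullet> a) < \<alpha>0 * \<alpha>1"
  using pos_def_block_mat_params[OF _ a pos_def] d by auto

lemma denominator_nonzero: "4 * (a \<bullet> a) - 2 * \<alpha>0 * \<alpha>1 \<noteq> 0"
  using schur_pos by simp

lemma Delta_nonneg: "\<Delta> \<ge> 0"
  and pencil_poly_factor: "pencil_poly \<alpha>0 a \<alpha>1 \<beta>0 b \<beta>1 c
    = of_real (2 * \<alpha>0 * \<alpha>1 - 4 * (a \<bullet> a)) * (c + of_real lamp) * (c + of_real lamm)"
  using pencil_poly_roots[OF a b alpha0_pos schur_pos Delta_def lamp_def lamm_def] by blast+

lemma pencil_eigenvalue_norm_le:
  fixes w :: "'a::{real_normed_field} vec"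
  assumes "w \<in> carrier_vec (d+1)" "w \<noteq> 0\<^sub>v (d+1)"
    and "map_mat of_real (block_mat d \<beta>0 b \<beta>1) *\<^sub>v w = c \<cdot>\<^sub>v (map_mat of_real (block_mat d \<alpha>0 a \<alpha>1) *\<^sub>v w)"
  shows "norm c \<le> max (\<bar>\<beta>0\<bar> / \<alpha>0) (max \<bar>lamp\<bar> \<bar>lamm\<bar>)"
  using block_pencil_eigenvalue_cases[OF a b assms]
proof
  assume "c * of_real \<alpha>0 = of_real \<beta>0"
  then have "c = of_real \<beta>0 / of_real \<alpha>0" using alpha0_pos by (simp add: field_simps)
  then have "norm c = \<bar>\<beta>0\<bar> / \<alpha>0" using alpha0_pos by (simp add: norm_divide)
  then show ?thesis by simp
next
  assume "pencil_poly \<alpha>0 a \<alpha>1 \<beta>0 b \<beta>1 c = 0"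
  moreover have "(of_real (2 * \<alpha>0 * \<alpha>1 - 4 * (a \<bullet> a)) :: 'a) \<noteq> 0"
    using schur_pos by (simp only: of_real_eq_0_iff)
  ultimately have "c + of_real lamp = 0 \<or> c + of_real lamm = 0"
    unfolding pencil_poly_factor by (metis mult_eq_0_iff)
  then have "c = - of_real lamp \<or> c = - of_real lamm" by (auto simp: add_eq_0_iff2)
  then show ?thesis by auto
qed

lemma max_pencil_eigenvector:
  obtains l w where "\<bar>l\<bar> = max (\<bar>\<beta>0\<bar> / \<alpha>0) (max \<bar>lamp\<bar> \<bar>lamm\<bar>)"
    "w \<in> carrier_vec (d+1)" "w \<noteq> 0\<^sub>v (d+1)"
    "block_mat d \<beta>0 b \<beta>1 *\<^sub>v w = l \<cdot>\<^sub>v (block_mat d \<alpha>0 a \<alpha>1 *\<^sub>v w)"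
proof -
  obtain l where l: "\<bar>l\<bar> = max (\<bar>\<beta>0\<bar> / \<alpha>0) (max \<bar>lamp\<bar> \<bar>lamm\<bar>)"
    and root: "l * \<alpha>0 = \<beta>0 \<or> pencil_poly \<alpha>0 a \<alpha>1 \<beta>0 b \<beta>1 l = 0"
  proof -
    have roots: "pencil_poly \<alpha>0 a \<alpha>1 \<beta>0 b \<beta>1 (- lamp) = 0" "pencil_poly \<alpha>0 a \<alpha>1 \<beta>0 b \<beta>1 (- lamm) = 0"
      unfolding pencil_poly_factor by simp_all
    have quot: "\<beta>0 / \<alpha>0 * \<alpha>0 = \<beta>0" "\<bar>\<beta>0 / \<alpha>0\<bar> = \<bar>\<beta>0\<bar> / \<alpha>0"
      using alpha0_pos by (simp_all add: abs_divide)
    consider "\<bar>lamp\<bar> \<le> \<bar>\<beta>0\<bar> / \<alpha>0" "\<bar>lamm\<bar> \<le> \<bar>\<beta>0\<bar> / \<alpha>0"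
      | "\<bar>\<beta>0\<bar> / \<alpha>0 \<le> \<bar>lamp\<bar>" "\<bar>lamm\<bar> \<le> \<bar>lamp\<bar>"
      | "\<bar>\<beta>0\<bar> / \<alpha>0 \<le> \<bar>lamm\<bar>" "\<bar>lamp\<bar> \<le> \<bar>lamm\<bar>"
      by linarith
    then show ?thesis
    proof cases
      case 1
      then have "\<bar>\<beta>0 / \<alpha>0\<bar> = max (\<bar>\<beta>0\<bar> / \<alpha>0) (max \<bar>lamp\<bar> \<bar>lamm\<bar>)"
        unfolding quot(2) by (simp add: max_def)
      with that quot(1) show ?thesis by metis
    next
      case 2
      then have "\<bar>- lamp\<bar> = max (\<bar>\<beta>0\<bar> / \<alpha>0) (max \<bar>lamp\<bar> \<bar>lamm\<bar>)"
        by (simp add: max_def)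
      with that roots(1) show ?thesis by metis
    next
      case 3
      then have "\<bar>- lamm\<bar> = max (\<bar>\<beta>0\<bar> / \<alpha>0) (max \<bar>lamp\<bar> \<bar>lamm\<bar>)"
        by (simp add: max_def)
      with that roots(2) show ?thesis by metis
    qed
  qed
  from block_pencil_eigenvector_exists[OF d a b root] that[OF l] show ?thesis by blast
qed

lemma rayleigh_quotient_le:
  assumes z: "z \<in> carrier_vec (d+1)" "z \<noteq> 0\<^sub>v (d+1)"
  shows "\<bar>z \<bullet> (block_mat d \<beta>0 b \<beta>1 *\<^sub>v z)\<bar> / (z \<bullet> (block_mat d \<alpha>0 a \<alpha>1 *\<^sub>v z))
    \<le> max (\<bar>\<beta>0\<bar> / \<alpha>0) (max \<bar>lamp\<bar> \<bar>lamm\<bar>)"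
proof (rule dense_ge)
  fix \<mu> assume \<mu>: "max (\<bar>\<beta>0\<bar> / \<alpha>0) (max \<bar>lamp\<bar> \<bar>lamm\<bar>) < \<mu>"
  let ?QA = "z \<bullet> (block_mat d \<alpha>0 a \<alpha>1 *\<^sub>v z)" and ?QB = "z \<bullet> (block_mat d \<beta>0 b \<beta>1 *\<^sub>v z)"
  have QA: "?QA > 0" using pos_def z by (simp add: pos_def_mat_def)
  have "\<bar>\<beta>0\<bar> < \<mu> * \<alpha>0" using \<mu> alpha0_pos by (simp add: field_simps)
  moreover have "pencil_poly \<alpha>0 a \<alpha>1 \<beta>0 b \<beta>1 \<mu> \<ge> (0::real)" "pencil_poly \<alpha>0 a \<alpha>1 \<beta>0 b \<beta>1 (- \<mu>) \<ge> (0::real)"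
  proof -
    have K: "2 * \<alpha>0 * \<alpha>1 - 4 * (a \<bullet> a) > 0" using schur_pos by simp
    have "0 < \<mu> + lamp" "0 < \<mu> + lamm" "0 < \<mu> - lamp" "0 < \<mu> - lamm" using \<mu> by auto
    moreover have "pencil_poly \<alpha>0 a \<alpha>1 \<beta>0 b \<beta>1 (- \<mu>) = (2 * \<alpha>0 * \<alpha>1 - 4 * (a \<bullet> a)) * (\<mu> - lamp) * (\<mu> - lamm)"
      unfolding pencil_poly_factor by (simp add: algebra_simps)
    ultimately show "pencil_poly \<alpha>0 a \<alpha>1 \<beta>0 b \<beta>1 \<mu> \<ge> (0::real)" "pencil_poly \<alpha>0 a \<alpha>1 \<beta>0 b \<beta>1 (- \<mu>) \<ge> (0::real)"
      using K unfolding pencil_poly_factor[of \<mu>] by simp_all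
  qed
  ultimately have "?QB \<le> \<mu> * ?QA"
    and "z \<bullet> (block_mat d (- \<beta>0) (- b) (- \<beta>1) *\<^sub>v z) \<le> \<mu> * ?QA"
    using b by (auto intro!: block_pencil_quadratic_form_le[OF a _ z(1)] simp: pencil_poly_uminus[OF a b])
  then have "?QB \<le> \<mu> * ?QA" "- ?QB \<le> \<mu> * ?QA"
    unfolding block_mat_quadratic_form_uminus[OF b z(1)] .
  then show "\<bar>?QB\<bar> / ?QA \<le> \<mu>" using QA by (simp add: divide_le_eq)
qed

lemma spectral_radius_eq:
  "spectral_radius (map_mat complex_of_real (inv_sqrt (d+1) (block_mat d \<alpha>0 a \<alpha>1)
      * block_mat d \<beta>0 b \<beta>1 * inv_sqrt (d+1) (block_mat d \<alpha>0 a \<alpha>1)))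
    = max (\<bar>\<beta>0\<bar> / \<alpha>0) (max \<bar>lamp\<bar> \<bar>lamm\<bar>)"
proof -
  let ?A = "block_mat d \<alpha>0 a \<alpha>1" and ?B = "block_mat d \<beta>0 b \<beta>1"
  obtain S where S: "pos_def_mat (d+1) S" "S * S = ?A"
    using block_mat_sqrt_exists[OF a alpha0_pos schur_pos] by blast
  have Sc: "S \<in> carrier_mat (d+1) (d+1)" using S(1) by (rule pos_def_mat_carrier)
  obtain S' where S': "S' \<in> carrier_mat (d+1) (d+1)" "S * S' = 1\<^sub>m (d+1)" "S' * S = 1\<^sub>m (d+1)"
    using pos_def_mat_invertible[OF S(1)] by blast
  have Bc: "?B \<in> carrier_mat (d+1) (d+1)" by (rule block_mat_carrier)
  have inv_sqrt: "inv_sqrt (d+1) ?A = S'"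
    unfolding inv_sqrt_def pd_sqrt_eqI[OF S] by (rule mat_inv_eqI[OF Sc S'])
  obtain l w where l: "\<bar>l\<bar> = max (\<bar>\<beta>0\<bar> / \<alpha>0) (max \<bar>lamp\<bar> \<bar>lamm\<bar>)"
    and w: "w \<in> carrier_vec (d+1)" "w \<noteq> 0\<^sub>v (d+1)" "?B *\<^sub>v w = l \<cdot>\<^sub>v (?A *\<^sub>v w)"
    by (rule max_pencil_eigenvector)
  show ?thesis unfolding inv_sqrt
  proof (rule spectral_radius_eqI)
    show "map_mat complex_of_real (S' * ?B * S') \<in> carrier_mat (d+1) (d+1)" using S'(1) Bc by simp
    fix c assume "c \<in> spectrum (map_mat complex_of_real (S' * ?B * S'))"
    from spectrum_of_real_congruence_imp_pencil[OF Sc S'(1) Bc S'(2) this]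
    show "norm c \<le> max (\<bar>\<beta>0\<bar> / \<alpha>0) (max \<bar>lamp\<bar> \<bar>lamm\<bar>)"
      using pencil_eigenvalue_norm_le unfolding S(2) by metis
  next
    show "complex_of_real l \<in> spectrum (map_mat complex_of_real (S' * ?B * S'))"
      using pencil_eigenvalue_in_spectrum_of_real[OF Sc S'(1) Bc S'(3) w(1,2)] w(3) S(2) by simp
    show "norm (complex_of_real l) = max (\<bar>\<beta>0\<bar> / \<alpha>0) (max \<bar>lamp\<bar> \<bar>lamm\<bar>)"
      using l by simp
  qed simp
qed

end

theorem mainTheorem1:
  fixes d :: nat and A B :: "real mat" and \<Delta> lamp lamm \<rho> :: real and \<alpha>0 \<alpha>1 \<beta>0 \<beta>1 :: real and a b :: "real vec"
  assumes "d \<ge> 2"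
    and "a \<in> carrier_vec d" and "b \<in> carrier_vec d"
    and "pos_def_mat (d+1) (block_mat d \<alpha>0 a \<alpha>1)"
    and A_def: "A = block_mat d \<alpha>0 a \<alpha>1"
    and B_def: "B = block_mat d \<beta>0 b \<beta>1"
    and Delta_def: "\<Delta> = (4 * (a \<bullet> b) - (\<beta>1 * \<alpha>0 + \<beta>0 * \<alpha>1))\<^sup>2
              - 4 * (2 * (a \<bullet> a) - \<alpha>0 * \<alpha>1) * (2 * (b \<bullet> b) - \<beta>0 * \<beta>1)"
    and lamp_def: "lamp = ((- 4 * (a \<bullet> b) + (\<beta>1 * \<alpha>0 + \<beta>0 * \<alpha>1)) + sqrt \<Delta>)
              / (4 * (a \<bullet> a) - 2 * \<alpha>0 * \<alpha>1)"
    and lamm_def: "lamm = ((- 4 * (a \<bullet> b) + (\<beta>1 * \<alpha>0 + \<beta>0 * \<alpha>1)) - sqrt \<Delta>)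
              / (4 * (a \<bullet> a) - 2 * \<alpha>0 * \<alpha>1)"
    and rho_def: "\<rho> = spectral_radius
              (map_mat complex_of_real (inv_sqrt (d+1) A * B * inv_sqrt (d+1) A))"
  shows "\<Delta> \<ge> 0 \<and> 4 * (a \<bullet> a) - 2 * \<alpha>0 * \<alpha>1 \<noteq> 0
     \<and> (\<exists>z \<in> carrier_vec (d+1). z \<noteq> 0\<^sub>v (d+1) \<and> \<bar>z \<bullet> (B *\<^sub>v z)\<bar> / (z \<bullet> (A *\<^sub>v z)) = \<rho>)
     \<and> (\<forall>z \<in> carrier_vec (d+1). z \<noteq> 0\<^sub>v (d+1) \<longrightarrow> \<bar>z \<bullet> (B *\<^sub>v z)\<bar> / (z \<bullet> (A *\<^sub>v z)) \<le> \<rho>)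
     \<and> \<rho> = max (\<bar>\<beta>0\<bar> / \<alpha>0) (max \<bar>lamp\<bar> \<bar>lamm\<bar>)"
proof -
  interpret block_pencil d \<alpha>0 \<alpha>1 \<beta>0 \<beta>1 \<Delta> lamp lamm a b
    using assms(1-4) Delta_def lamp_def lamm_def by unfold_locales
  have rho_eq: "\<rho> = max (\<bar>\<beta>0\<bar> / \<alpha>0) (max \<bar>lamp\<bar> \<bar>lamm\<bar>)"
    unfolding rho_def A_def B_def by (rule spectral_radius_eq)
  obtain l w where l: "\<bar>l\<bar> = max (\<bar>\<beta>0\<bar> / \<alpha>0) (max \<bar>lamp\<bar> \<bar>lamm\<bar>)"
    and w: "w \<in> carrier_vec (d+1)" "w \<noteq> 0\<^sub>v (d+1)" "B *\<^sub>v w = l \<cdot>\<^sub>v (A *\<^sub>v w)"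
    using max_pencil_eigenvector unfolding A_def B_def by blast
  have "\<bar>w \<bullet> (B *\<^sub>v w)\<bar> / (w \<bullet> (A *\<^sub>v w)) = \<rho>"
    using rayleigh_quotient_pencil_eigenvector[OF assms(4)[folded A_def] w] l rho_eq by simp
  with w(1,2) have "\<exists>z \<in> carrier_vec (d+1). z \<noteq> 0\<^sub>v (d+1) \<and> \<bar>z \<bullet> (B *\<^sub>v z)\<bar> / (z \<bullet> (A *\<^sub>v z)) = \<rho>"
    by blast
  moreover have "\<forall>z \<in> carrier_vec (d+1). z \<noteq> 0\<^sub>v (d+1) \<longrightarrow> \<bar>z \<bullet> (B *\<^sub>v z)\<bar> / (z \<bullet> (A *\<^sub>v z)) \<le> \<rho>"
    using rayleigh_quotient_le unfolding A_def B_def rho_eq by blast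
  ultimately show ?thesis using Delta_nonneg denominator_nonzero rho_eq by blast
qed

end
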